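(* Let $G=(V,E)$ be a path on $n\ge1$ vertices and let $\{A_v\}_{v\in V}$ be events in a probability space. Then \[ \Pr\Big(\bigcup_{v\in V} A_v\Big) \;\ge\; \frac{1}{\lceil n/2\rceil}\Big(\sum_{v\in V}\Pr(A_v) - \sum_{\{v,w\}\in E}\Pr(A_v\cap A_w)\Big). \] *)

theory Defs
  imports "HOL-Probability.Probability"
begin

end

theory Submission
  imports Defs
begin

(* Let P be the set of indices i < n with x \<in> A i, for a fixed
   sample point x.  The quantity
     (number of i with P i) - (number of path edges {i, i+1} with P i \<and> P (i+1))
   equals the number of maximal blocks of consecutive indices in P.  Two blocks
   are separated by at least one index outside P, so there are at most
   \<lceil>n/2\<rceil> blocks, and none when x lies in no A i.  Hence pointwise
     block_count \<le> \<lceil>n/2\<rceil> * indicator of the union.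
   The block count is a signed sum of indicator functions whose integral is the
   alternating sum of probabilities in the theorem, so integrating the pointwise
   inequality yields the theorem. *)

text \<open>The number of maximal blocks of consecutive indices below n satisfying P,
  written as vertices minus edges of the subgraph of the path that P induces.\<close>

definition block_count :: "(nat \<Rightarrow> bool) \<Rightarrow> nat \<Rightarrow> real" where
  "block_count P n = (\<Sum>i<n. of_bool (P i)) - (\<Sum>i<n - 1. of_bool (P i \<and> P (Suc i)))"

lemma block_count_Suc_Suc:
  "block_count P (Suc (Suc m)) = block_count P (Suc m) + of_bool (P (Suc m) \<and> \<not> P m)"
  unfolding block_count_def by (cases "P m"; cases "P (Suc m)") simp_all

text \<open>Blocks are separated by gaps, so at most (n+1) div 2 fit on the path; if the
  last vertex is not in P, the last position is wasted and n div 2 is the bound.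
  The two bounds are combined into one statement so that the induction goes through.\<close>

lemma block_count_le: "block_count P n \<le> real ((n + of_bool (P (n - 1))) div 2)"
proof (induction n rule: induct_nat_012)
  case 0
  then show ?case by (simp add: block_count_def)
next
  case 1
  then show ?case by (simp add: block_count_def)
next
  case (ge2 m)
  have "block_count P (Suc (Suc m)) \<le> real ((Suc m + of_bool (P m)) div 2) + of_bool (P (Suc m) \<and> \<not> P m)"
    using ge2.IH(2) by (simp add: block_count_Suc_Suc)
  also have "\<dots> \<le> real ((Suc (Suc m) + of_bool (P (Suc m))) div 2)"
    by (cases "P m"; cases "P (Suc m)") simp_all
  finally show ?case by simp
qed

lemma block_count_le_indicator:
  "block_count P n \<le> real ((n + 1) div 2) * of_bool (\<exists>i<n. P i)"
proof (cases "\<exists>i<n. P i")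
  case True
  have "real ((n + of_bool (P (n - 1))) div 2) \<le> real ((n + 1) div 2)"
    by (simp add: div_le_mono)
  with block_count_le[of P n] True show ?thesis by simp
next
  case False
  then show ?thesis by (simp add: block_count_def)
qed

lemma block_count_indicator:
  "block_count (\<lambda>i. x \<in> A i) n
     = (\<Sum>i<n. indicator (A i) x) - (\<Sum>i<n - 1. indicator (A i \<inter> A (Suc i)) x)"
  by (simp add: block_count_def indicator_def)

lemma integral_block_count:
  assumes "finite_measure M" and sets: "\<And>i. i < n \<Longrightarrow> A i \<in> sets M"
  shows "integrable M (\<lambda>x. block_count (\<lambda>i. x \<in> A i) n)"
    and "(\<integral>x. block_count (\<lambda>i. x \<in> A i) n \<partial>M)
           = (\<Sum>i<n. measure M (A i)) - (\<Sum>i<n - 1. measure M (A i \<inter> A (Suc i)))"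
proof -
  interpret finite_measure M by (rule assms(1))
  have indicator_integrable: "\<And>B. B \<in> sets M \<Longrightarrow> integrable M (indicator B :: 'a \<Rightarrow> real)"
    by (simp add: emeasure_eq_measure)
  have vertex_sum: "integrable M (\<lambda>x. \<Sum>i<n. indicator (A i) x :: real)"
    using sets indicator_integrable by auto
  have edge_sum: "integrable M (\<lambda>x. \<Sum>i<n - 1. indicator (A i \<inter> A (Suc i)) x :: real)"
    using sets indicator_integrable by auto
  show "integrable M (\<lambda>x. block_count (\<lambda>i. x \<in> A i) n)"
    unfolding block_count_indicator using vertex_sum edge_sum by auto
  have "(\<integral>x. block_count (\<lambda>i. x \<in> A i) n \<partial>M)
      = (\<integral>x. (\<Sum>i<n. indicator (A i) x) \<partial>M)
        - (\<integral>x. (\<Sum>i<n - 1. indicator (A i \<inter> A (Suc i)) x) \<partial>M)"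
    unfolding block_count_indicator using vertex_sum edge_sum by simp
  also have "\<dots> = (\<Sum>i<n. measure M (A i)) - (\<Sum>i<n - 1. measure M (A i \<inter> A (Suc i)))"
    using sets indicator_integrable by (simp add: Bochner_Integration.integral_sum)
  finally show "(\<integral>x. block_count (\<lambda>i. x \<in> A i) n \<partial>M)
      = (\<Sum>i<n. measure M (A i)) - (\<Sum>i<n - 1. measure M (A i \<inter> A (Suc i)))" .
qed

lemma path_union_bound:
  assumes "finite_measure M" and sets: "\<And>i. i < n \<Longrightarrow> A i \<in> sets M"
  shows "(\<Sum>i<n. measure M (A i)) - (\<Sum>i<n - 1. measure M (A i \<inter> A (Suc i)))
           \<le> real ((n + 1) div 2) * measure M (\<Union>i<n. A i)"
proof -
  interpret finite_measure M by (rule assms(1))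
  have union: "(\<Union>i<n. A i) \<in> sets M"
    using sets by auto
  have indicator_union: "\<And>x. of_bool (\<exists>i<n. x \<in> A i) = (indicator (\<Union>i<n. A i) x :: real)"
    by (auto simp: indicator_def)
  have "(\<Sum>i<n. measure M (A i)) - (\<Sum>i<n - 1. measure M (A i \<inter> A (Suc i)))
      = (\<integral>x. block_count (\<lambda>i. x \<in> A i) n \<partial>M)"
    using integral_block_count(2)[OF assms] by simp
  also have "\<dots> \<le> (\<integral>x. real ((n + 1) div 2) * indicator (\<Union>i<n. A i) x \<partial>M)"
  proof (rule integral_mono)
    show "integrable M (\<lambda>x. block_count (\<lambda>i. x \<in> A i) n)"
      using integral_block_count(1)[OF assms] .
    show "integrable M (\<lambda>x. real ((n + 1) div 2) * indicator (\<Union>i<n. A i) x)"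
      using union by (simp add: emeasure_eq_measure)
    show "block_count (\<lambda>i. x \<in> A i) n \<le> real ((n + 1) div 2) * indicator (\<Union>i<n. A i) x" for x
      using block_count_le_indicator[of "\<lambda>i. x \<in> A i" n] by (simp add: indicator_union)
  qed
  also have "\<dots> = real ((n + 1) div 2) * measure M (\<Union>i<n. A i)"
    using union by simp
  finally show ?thesis .
qed

lemma ceiling_half_nat: "\<lceil>real n / 2\<rceil> = int ((n + 1) div 2)"
proof -
  have "real n / 2 = real_of_int (int n) / real_of_int 2" by simp
  then have "\<lceil>real n / 2\<rceil> = - (- int n div 2)"
    by (simp only: ceiling_divide_eq_div)
  also have "\<dots> = int ((n + 1) div 2)" by presburger
  finally show ?thesis .
qed

theorem mainTheorem6:
  fixes M :: "'a measure" and A :: "nat \<Rightarrow> 'a set" and n :: nat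
  assumes "prob_space M"
    and "n \<ge> 1"
    and "\<And>i. i < n \<Longrightarrow> A i \<in> sets M"
  shows "measure M (\<Union>i<n. A i) \<ge>
           (1 / real_of_int \<lceil>real n / 2\<rceil>) *
           ((\<Sum>i<n. measure M (A i)) - (\<Sum>i<n - 1. measure M (A i \<inter> A (Suc i))))"
proof -
  have "finite_measure M"
    using assms(1) by (simp add: prob_space_def)
  then have bound: "(\<Sum>i<n. measure M (A i)) - (\<Sum>i<n - 1. measure M (A i \<inter> A (Suc i)))
                      \<le> real ((n + 1) div 2) * measure M (\<Union>i<n. A i)"
    using path_union_bound assms(3) by blast
  have "real ((n + 1) div 2) > 0"
    using assms(2) by simp
  with bound show ?thesis
    by (simp add: ceiling_half_nat field_simps)
qed

end
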